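(* Let $n\in\mathbb{N}$, $a<b$, and let $f:[a,b]\to\mathbb{R}$ be $(2n-1)$-convex. If $x_1,\dots,x_n\in(a,b)$, then there exists a polynomial $p\in\Pi_{2n-1}$ such that $p(x_i)=f(x_i)$ for $i=1,\dots,n$ and $p(x)\le f(x)$ for all $x\in[a,b]$.
   Context: $\Pi_m$ denotes the set of real polynomials of degree at most $m$. Divided differences are defined recursively by $[x_1;f]:=f(x_1)$ and $[x_1,\dots,x_{m+1};f]:=\frac{[x_2,\dots,x_{m+1};f]-[x_1,\dots,x_m;f]}{x_{m+1}-x_1}$ for pairwise distinct points. For $m\in\mathbb{N}$, a function $f$ on an interval $I$ is called $m$-convex if $[x_1,\dots,x_{m+2};f]\ge 0$ for all pairwise distinct $x_1,\dots,x_{m+2}\in I$. *)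

theory Defs
  imports Complex_Main "HOL-Computational_Algebra.Polynomial"
begin

fun divdiff :: "real list \<Rightarrow> (real \<Rightarrow> real) \<Rightarrow> real" where
  "divdiff [] f = 0"
| "divdiff [x] f = f x"
| "divdiff (x # y # ys) f =
     (divdiff (y # ys) f - divdiff (butlast (x # y # ys)) f) / (last (y # ys) - x)"

definition m_convex :: "nat \<Rightarrow> real set \<Rightarrow> (real \<Rightarrow> real) \<Rightarrow> bool" where
  "m_convex m I f \<longleftrightarrow>
     (\<forall>xs. length xs = m + 2 \<longrightarrow> distinct xs \<longrightarrow> set xs \<subseteq> I \<longrightarrow> divdiff xs f \<ge> 0)"

end

theory Submission
  imports Defs "HOL-Analysis.Analysis"
begin

text \<open>Interpolate f at the 2n nodes y and y + d (y \<in> Y). At any other point t the error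
  f t - p t is the divided difference of f on these nodes and t, nonnegative by
  (2n-1)-convexity, times \<Prod>y\<in>Y. (t - y) (t - y - d), which is nonnegative unless t lies in
  one of the short gaps (y, y + d). So for every finite T \<subseteq> [a,b] a small enough d yields a
  polynomial that interpolates f on Y and lies below f on T.

  Now fix one such d. Any polynomial of degree < 2n agreeing with f on Y is determined by its
  values at the shifted nodes y + d. For the polynomials lying below f at a and at the shifted
  nodes, these values are confined to a compact box: they are bounded above by f, and below
  because the Lagrange basis polynomials of the shifted nodes are negative at a. The finite
  intersection property of the box then yields one polynomial lying below f on all of [a,b].\<close>

text \<open>Unlike the recursive divided difference, this form depends only on the set of nodes.\<close>

definition divdiff_set :: "real set \<Rightarrow> (real \<Rightarrow> real) \<Rightarrow> real" where
  "divdiff_set S f = (\<Sum>u\<in>S. f u / (\<Prod>v\<in>S - {u}. u - v))"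

lemma divdiff_set_term_recurrence:
  fixes S :: "real set"
  assumes S: "finite S" "x \<in> S" "l \<in> S" "x \<noteq> l" and u: "u \<in> S"
  shows "(l - x) * (f u / (\<Prod>v\<in>S - {u}. u - v)) =
    (if u = x then 0 else f u / (\<Prod>v\<in>S - {x} - {u}. u - v)) -
    (if u = l then 0 else f u / (\<Prod>v\<in>S - {l} - {u}. u - v))"
proof -
  have remove: "(\<Prod>v\<in>A. u - v) = (u - w) * (\<Prod>v\<in>A - {w}. u - v)"
    if "A \<subseteq> S" "w \<in> A" for A w
    using that S(1) by (simp add: prod.remove finite_subset)
  consider "u = x" | "u = l" | "u \<noteq> x" "u \<noteq> l" by blast
  then show ?thesis
  proof cases
    case 1
    define P where "P = (\<Prod>v\<in>S - {x} - {l}. x - v)"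
    have "P \<noteq> 0" "x - l \<noteq> 0" unfolding P_def using S by auto
    moreover have e: "(\<Prod>v\<in>S - {x}. x - v) = (x - l) * P"
      using S remove[of "S - {x}" l] unfolding 1 P_def by simp
    moreover have "S - {l} - {x} = S - {x} - {l}" by blast
    ultimately show ?thesis unfolding 1 by (simp only: e P_def[symmetric]) (simp add: field_simps)
  next
    case 2
    define P where "P = (\<Prod>v\<in>S - {l} - {x}. l - v)"
    have "P \<noteq> 0" "l - x \<noteq> 0" unfolding P_def using S by auto
    moreover have e: "(\<Prod>v\<in>S - {l}. l - v) = (l - x) * P"
      using S remove[of "S - {l}" x] unfolding 2 P_def by simp
    moreover have "S - {x} - {l} = S - {l} - {x}" by blast
    ultimately show ?thesis unfolding 2 using S(4)
      by (simp only: e P_def[symmetric]) (simp add: field_simps)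
  next
    case 3
    define Q where "Q = S - {u} - {x} - {l}"
    define P where "P = (\<Prod>v\<in>Q. u - v)"
    have "S - {x} - {u} - {l} = Q" "S - {l} - {u} - {x} = Q" unfolding Q_def by blast+
    then have e: "(\<Prod>v\<in>S - {u}. u - v) = (u - x) * ((u - l) * P)"
      "(\<Prod>v\<in>S - {x} - {u}. u - v) = (u - l) * P"
      "(\<Prod>v\<in>S - {l} - {u}. u - v) = (u - x) * P"
      using 3 S remove[of "S - {u}" x] remove[of "S - {u} - {x}" l]
        remove[of "S - {x} - {u}" l] remove[of "S - {l} - {u}" x]
      unfolding P_def Q_def by auto
    moreover have "P \<noteq> 0" "u - x \<noteq> 0" "u - l \<noteq> 0" unfolding P_def Q_def using S 3 by auto
    moreover have partial_fractions: "(A - B) * (c / (A * (B * P))) = c / (B * P) - c / (A * P)"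
      if "A \<noteq> 0" "B \<noteq> 0" "P \<noteq> 0" for A B c :: real
      using that by (simp add: field_simps)
    moreover have "(u - x) - (u - l) = l - x" by simp
    ultimately have "(l - x) * (f u / ((u - x) * ((u - l) * P))) =
        f u / ((u - l) * P) - f u / ((u - x) * P)"
      by metis
    then show ?thesis using 3 by (simp only: e) simp
  qed
qed

lemma divdiff_set_remove:
  assumes "finite S" "w \<in> S"
  shows "divdiff_set (S - {w}) f = (\<Sum>u\<in>S. if u = w then 0 else f u / (\<Prod>v\<in>S - {w} - {u}. u - v))"
  using assms by (simp add: divdiff_set_def sum.If_cases Diff_eq Int_commute)

lemma divdiff_set_recurrence:
  fixes S :: "real set"
  assumes "finite S" "x \<in> S" "l \<in> S" "x \<noteq> l"
  shows "(l - x) * divdiff_set S f = divdiff_set (S - {x}) f - divdiff_set (S - {l}) f"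
proof -
  have "(l - x) * divdiff_set S f = (\<Sum>u\<in>S. (l - x) * (f u / (\<Prod>v\<in>S - {u}. u - v)))"
    unfolding divdiff_set_def by (simp add: sum_distrib_left)
  also have "\<dots> = (\<Sum>u\<in>S. (if u = x then 0 else f u / (\<Prod>v\<in>S - {x} - {u}. u - v)) -
      (if u = l then 0 else f u / (\<Prod>v\<in>S - {l} - {u}. u - v)))"
    using assms by (intro sum.cong refl divdiff_set_term_recurrence)
  also have "\<dots> = divdiff_set (S - {x}) f - divdiff_set (S - {l}) f"
    using assms by (simp add: sum_subtractf divdiff_set_remove)
  finally show ?thesis .
qed

lemma set_butlast_distinct:
  assumes "distinct xs" shows "set (butlast xs) = set xs - {last xs}"
proof (cases "xs = []")
  case False
  then have "xs = butlast xs @ [last xs]" by simp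
  with assms have "last xs \<notin> set (butlast xs)"
    by (metis distinct_append disjoint_iff list.set_intros(1) set_ConsD set_append)
  then show ?thesis by (subst (2) \<open>xs = butlast xs @ [last xs]\<close>) auto
qed simp

lemma divdiff_eq_divdiff_set: "distinct xs \<Longrightarrow> divdiff xs f = divdiff_set (set xs) f"
proof (induction xs f rule: divdiff.induct)
  case (3 x y ys f)
  define l where "l = last (y # ys)"
  have l: "l \<in> set (y # ys)" unfolding l_def by simp
  with "3.prems" have "x \<noteq> l" by auto
  have IH: "divdiff (y # ys) f = divdiff_set (set (y # ys)) f"
    "divdiff (butlast (x # y # ys)) f = divdiff_set (set (butlast (x # y # ys))) f"
    using "3.IH" "3.prems" distinct_butlast[OF "3.prems"] by simp_all
  have "set (butlast (x # y # ys)) = set (x # y # ys) - {l}"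
    using set_butlast_distinct[OF "3.prems"] unfolding l_def by simp
  moreover have "set (y # ys) = set (x # y # ys) - {x}" using "3.prems" by auto
  moreover have "(l - x) * divdiff_set (set (x # y # ys)) f =
      divdiff_set (set (x # y # ys) - {x}) f - divdiff_set (set (x # y # ys) - {l}) f"
    using l \<open>x \<noteq> l\<close> by (intro divdiff_set_recurrence) auto
  ultimately show ?case using \<open>x \<noteq> l\<close>
    by (simp only: divdiff.simps IH flip: l_def) (simp add: field_simps)
qed (simp_all add: divdiff_set_def)

lemma m_convex_imp_divdiff_set_nonneg:
  assumes "m_convex m I f" "finite S" "S \<subseteq> I" "card S = m + 2"
  shows "divdiff_set S f \<ge> 0"
proof -
  define xs where "xs = sorted_list_of_set S"
  have "distinct xs" "set xs = S" "length xs = card S" using assms unfolding xs_def by auto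
  then show ?thesis
    using assms divdiff_eq_divdiff_set[of xs f] unfolding m_convex_def by auto
qed

definition lagrange_basis :: "real set \<Rightarrow> real \<Rightarrow> real \<Rightarrow> real" where
  "lagrange_basis N u t = (\<Prod>v\<in>N - {u}. t - v) / (\<Prod>v\<in>N - {u}. u - v)"

definition lagrange_interpolant :: "real set \<Rightarrow> (real \<Rightarrow> real) \<Rightarrow> real poly" where
  "lagrange_interpolant N g =
     (\<Sum>u\<in>N. smult (g u / (\<Prod>v\<in>N - {u}. u - v)) (\<Prod>v\<in>N - {u}. [:-v, 1:]))"

lemma poly_lagrange_interpolant:
  "poly (lagrange_interpolant N g) t = (\<Sum>u\<in>N. g u * lagrange_basis N u t)"
  unfolding lagrange_interpolant_def poly_sum
proof (rule sum.cong[OF refl])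
  fix u
  have "poly (\<Prod>v\<in>N - {u}. [:-v, 1:]) t = (\<Prod>v\<in>N - {u}. t - v)"
    by (simp add: poly_prod)
  then show "poly (smult (g u / (\<Prod>v\<in>N - {u}. u - v)) (\<Prod>v\<in>N - {u}. [:-v, 1:])) t =
      g u * lagrange_basis N u t"
    by (simp add: lagrange_basis_def)
qed

lemma lagrange_basis_node:
  assumes "finite N" "u \<in> N" "w \<in> N"
  shows "lagrange_basis N u w = of_bool (w = u)"
  using assms by (auto simp: lagrange_basis_def)

lemma poly_lagrange_interpolant_node:
  "finite N \<Longrightarrow> w \<in> N \<Longrightarrow> poly (lagrange_interpolant N g) w = g w"
  by (simp add: poly_lagrange_interpolant lagrange_basis_node cong: sum.cong)

lemma degree_lagrange_interpolant:
  assumes "finite N" shows "degree (lagrange_interpolant N g) \<le> card N - 1"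
  unfolding lagrange_interpolant_def
proof (intro degree_sum_le assms order.trans[OF degree_smult_le])
  fix u assume "u \<in> N"
  have "degree (\<Prod>v\<in>N - {u}. [:-v, 1:]) \<le> (\<Sum>v\<in>N - {u}. degree [:-v, 1:])"
    using degree_prod_sum_le[of "N - {u}" "\<lambda>v. [:-v, 1:]"] assms by (simp add: o_def)
  also have "\<dots> = card N - 1" using assms \<open>u \<in> N\<close> by simp
  finally show "degree (\<Prod>v\<in>N - {u}. [:-v, 1:]) \<le> card N - 1" .
qed

lemma lagrange_interpolant_cong:
  "(\<And>u. u \<in> N \<Longrightarrow> g u = h u) \<Longrightarrow> lagrange_interpolant N g = lagrange_interpolant N h"
  unfolding lagrange_interpolant_def by (rule sum.cong) auto

lemma lagrange_interpolant_poly: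
  assumes "finite N" "degree p < card N"
  shows "lagrange_interpolant N (poly p) = p"
proof (rule poly_eqI_degree[of N])
  show "degree (lagrange_interpolant N (poly p)) < card N"
    using degree_lagrange_interpolant[OF assms(1), of "poly p"] assms(2) by linarith
qed (use assms poly_lagrange_interpolant_node in auto)

lemma lagrange_interpolation_error:
  assumes "finite N" "t \<notin> N"
  shows "f t - poly (lagrange_interpolant N f) t = divdiff_set (insert t N) f * (\<Prod>v\<in>N. t - v)"
proof -
  define W where "W = (\<Prod>v\<in>N. t - v)"
  have "W \<noteq> 0" unfolding W_def using assms by simp
  have summand: "f u / (\<Prod>v\<in>insert t N - {u}. u - v) * W = - (f u * lagrange_basis N u t)"
    if "u \<in> N" for u
  proof -
    have "insert t N - {u} = insert t (N - {u})" using that assms by auto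
    then have e1: "(\<Prod>v\<in>insert t N - {u}. u - v) = (u - t) * (\<Prod>v\<in>N - {u}. u - v)"
      using assms by simp
    have e2: "W = (t - u) * (\<Prod>v\<in>N - {u}. t - v)"
      unfolding W_def using assms that by (simp add: prod.remove)
    have "(\<Prod>v\<in>N - {u}. u - v) \<noteq> 0" "u - t \<noteq> 0" using assms that by auto
    then show ?thesis unfolding lagrange_basis_def e1 e2 by (simp add: field_simps)
  qed
  have "insert t N - {t} = N" using assms by auto
  then have "divdiff_set (insert t N) f = f t / W + (\<Sum>u\<in>N. f u / (\<Prod>v\<in>insert t N - {u}. u - v))"
    unfolding divdiff_set_def W_def using assms by (simp add: sum.insert)
  then have "divdiff_set (insert t N) f * W = f t + (\<Sum>u\<in>N. f u / (\<Prod>v\<in>insert t N - {u}. u - v) * W)"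
    using \<open>W \<noteq> 0\<close> by (simp add: distrib_right sum_distrib_right)
  also have "\<dots> = f t + (\<Sum>u\<in>N. - (f u * lagrange_basis N u t))"
    by (simp only: sum.cong[OF refl summand])
  also have "\<dots> = f t - poly (lagrange_interpolant N f) t"
    by (simp add: poly_lagrange_interpolant sum_negf)
  finally show ?thesis unfolding W_def by simp
qed

lemma exists_separation:
  fixes Y T :: "real set"
  assumes "finite Y" "finite T"
  shows "\<exists>d>0. \<forall>y\<in>Y. \<forall>t\<in>T. y < t \<longrightarrow> d < t - y"
proof -
  have "\<forall>\<^sub>F d in at_right 0. y < t \<longrightarrow> d < t - y" for y t :: real
    by (cases "y < t") (auto simp: eventually_at_right_field intro!: exI[of _ "t - y"])
  then have "\<forall>\<^sub>F d in at_right 0. 0 < d \<and> (\<forall>y\<in>Y. \<forall>t\<in>T. y < t \<longrightarrow> d < t - y)"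
    using assms by (intro eventually_conj eventually_at_right_less eventually_ball_finite ballI)
  then show ?thesis using eventually_happens'[OF trivial_limit_at_right_real] by blast
qed

locale doubled_nodes =
  fixes Y :: "real set" and d :: real
  assumes finite_Y: "finite Y" and d_pos: "0 < d"
    and separated: "\<And>y y'. y \<in> Y \<Longrightarrow> y' \<in> Y \<Longrightarrow> y < y' \<Longrightarrow> d < y' - y"
begin

definition shifted :: "real set" where "shifted = (\<lambda>y. y + d) ` Y"

definition nodes :: "real set" where "nodes = Y \<union> shifted"

lemma finite_shifted: "finite shifted"
  unfolding shifted_def using finite_Y by simp

lemma finite_nodes: "finite nodes"
  unfolding nodes_def using finite_Y finite_shifted by simp

lemma Y_Int_shifted: "Y \<inter> shifted = {}"
proof -
  have "y + d \<notin> Y" if "y \<in> Y" for y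
    using separated[OF that, of "y + d"] d_pos by auto
  then show ?thesis unfolding shifted_def by auto
qed

lemma card_nodes: "card nodes = 2 * card Y"
proof -
  have "card shifted = card Y" unfolding shifted_def by (simp add: card_image inj_on_def)
  then show ?thesis
    unfolding nodes_def using finite_Y finite_shifted Y_Int_shifted by (simp add: card_Un_disjoint)
qed

lemma prod_nodes: "(\<Prod>u\<in>nodes. h u) = (\<Prod>y\<in>Y. h y * h (y + d))"
proof -
  have "(\<Prod>u\<in>shifted. h u) = (\<Prod>y\<in>Y. h (y + d))"
    unfolding shifted_def by (simp add: prod.reindex inj_on_def)
  then show ?thesis
    unfolding nodes_def using finite_Y finite_shifted Y_Int_shifted
    by (simp add: prod.union_disjoint prod.distrib)
qed

lemma prod_nodes_nonneg:
  assumes "\<And>y. y \<in> Y \<Longrightarrow> y < t \<Longrightarrow> d < t - y"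
  shows "0 \<le> (\<Prod>v\<in>nodes. t - v)"
  unfolding prod_nodes
proof (rule prod_nonneg)
  fix y assume "y \<in> Y"
  then show "0 \<le> (t - y) * (t - (y + d))"
    using assms[of y] d_pos by (cases "y < t") (auto intro: mult_nonpos_nonpos)
qed

lemma prod_nodes_shifted_pos:
  assumes "z \<in> shifted"
  shows "0 < (\<Prod>v\<in>nodes - {z}. z - v)"
proof -
  obtain y0 where "y0 \<in> Y" and z: "z = y0 + d" using assms unfolding shifted_def by auto
  have "z \<notin> Y" using assms Y_Int_shifted by auto
  define h where "h v = (if v = z then 1 else z - v)" for v
  have "z \<in> nodes" using assms unfolding nodes_def by simp
  have "(\<Prod>v\<in>nodes - {z}. z - v) = (\<Prod>v\<in>nodes - {z}. h v)"
    by (rule prod.cong) (auto simp: h_def)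
  also have "\<dots> = (\<Prod>v\<in>nodes. h v)"
    using prod.remove[OF finite_nodes \<open>z \<in> nodes\<close>, of h] by (simp add: h_def)
  also have "\<dots> = (\<Prod>y\<in>Y. h y * h (y + d))" by (rule prod_nodes)
  also have "0 < \<dots>"
  proof (rule prod_pos)
    fix y assume "y \<in> Y"
    show "0 < h y * h (y + d)"
    proof (cases "y = y0")
      case True
      then show ?thesis using d_pos \<open>z \<notin> Y\<close> \<open>y \<in> Y\<close> by (simp add: h_def z)
    next
      case False
      then have "y < y0 \<and> d < y0 - y \<or> y0 < y \<and> d < y - y0"
        using separated \<open>y \<in> Y\<close> \<open>y0 \<in> Y\<close> by (meson linorder_neqE)
      then show ?thesis using d_pos \<open>z \<notin> Y\<close> \<open>y \<in> Y\<close> False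
        by (auto simp: h_def z zero_less_mult_iff)
    qed
  qed
  finally show ?thesis .
qed

lemma lagrange_basis_shifted_neg:
  assumes "z \<in> shifted" and above: "\<And>v. v \<in> nodes \<Longrightarrow> a < v"
  shows "lagrange_basis nodes z a < 0"
proof -
  have "Y \<noteq> {}" using assms(1) unfolding shifted_def by auto
  then have "0 < card Y" using finite_Y by (simp add: card_gt_0_iff)
  moreover have "z \<in> nodes" using assms(1) unfolding nodes_def by simp
  ultimately have "card (nodes - {z}) = Suc (2 * (card Y - 1))"
    using card_nodes finite_nodes by simp
  then have "(\<Prod>v\<in>nodes - {z}. a - v) = - (\<Prod>v\<in>nodes - {z}. v - a)"
    using prod_uminus[of "\<lambda>v. v - a" "nodes - {z}"] by (simp add: power_mult)
  moreover have "0 < (\<Prod>v\<in>nodes - {z}. v - a)" using above by (intro prod_pos) auto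
  ultimately show ?thesis
    using prod_nodes_shifted_pos[OF assms(1)] by (simp add: lagrange_basis_def divide_neg_pos)
qed

lemma lagrange_interpolant_nodes_le:
  assumes "Y \<noteq> {}" "m_convex (2 * card Y - 1) I f" "nodes \<subseteq> I" "t \<in> I"
    and "\<And>y. y \<in> Y \<Longrightarrow> y < t \<Longrightarrow> d < t - y"
  shows "poly (lagrange_interpolant nodes f) t \<le> f t"
proof (cases "t \<in> nodes")
  case True
  then show ?thesis using finite_nodes by (simp add: poly_lagrange_interpolant_node)
next
  case False
  have "card (insert t nodes) = (2 * card Y - 1) + 2"
    using False finite_nodes card_nodes assms(1) finite_Y by (simp add: card_gt_0_iff)
  then have "0 \<le> divdiff_set (insert t nodes) f"
    using assms finite_nodes by (intro m_convex_imp_divdiff_set_nonneg) auto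
  then show ?thesis
    using lagrange_interpolation_error[OF finite_nodes False, of f] prod_nodes_nonneg[OF assms(5)]
    by (simp add: algebra_simps)
qed

lemma shifted_value_lower_bound:
  assumes above: "\<And>v. v \<in> nodes \<Longrightarrow> a < v" and "degree q < card nodes"
    and on_Y: "\<And>y. y \<in> Y \<Longrightarrow> poly q y = f y"
    and on_shifted: "\<And>z. z \<in> shifted \<Longrightarrow> poly q z \<le> f z"
    and "poly q a \<le> f a" and "z \<in> shifted"
  shows "(f a - (\<Sum>u\<in>nodes - {z}. f u * lagrange_basis nodes u a)) / lagrange_basis nodes z a
    \<le> poly q z"
proof -
  have "z \<in> nodes" using \<open>z \<in> shifted\<close> unfolding nodes_def by simp
  have "poly q a = (\<Sum>u\<in>nodes. poly q u * lagrange_basis nodes u a)"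
    by (metis lagrange_interpolant_poly[OF finite_nodes \<open>degree q < card nodes\<close>]
        poly_lagrange_interpolant)
  also have "\<dots> = poly q z * lagrange_basis nodes z a +
      (\<Sum>u\<in>nodes - {z}. poly q u * lagrange_basis nodes u a)"
    using finite_nodes \<open>z \<in> nodes\<close> by (rule sum.remove)
  finally have "poly q a = \<dots>" .
  moreover have "(\<Sum>u\<in>nodes - {z}. f u * lagrange_basis nodes u a)
      \<le> (\<Sum>u\<in>nodes - {z}. poly q u * lagrange_basis nodes u a)"
  proof (rule sum_mono)
    fix u assume "u \<in> nodes - {z}"
    then consider "u \<in> Y" | "u \<in> shifted" unfolding nodes_def by blast
    then show "f u * lagrange_basis nodes u a \<le> poly q u * lagrange_basis nodes u a"
      by cases (auto simp: on_Y intro: mult_right_mono_neg on_shifted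
          lagrange_basis_shifted_neg[OF _ above, THEN less_imp_le])
  qed
  ultimately show ?thesis
    using \<open>poly q a \<le> f a\<close> lagrange_basis_shifted_neg[OF \<open>z \<in> shifted\<close> above]
    by (simp add: neg_divide_le_eq)
qed


definition interpolant_with :: "(real \<Rightarrow> real) \<Rightarrow> (real \<Rightarrow> real) \<Rightarrow> real poly" where
  "interpolant_with f v = lagrange_interpolant nodes (\<lambda>u. if u \<in> Y then f u else v u)"

lemma degree_interpolant_with: "degree (interpolant_with f v) \<le> 2 * card Y - 1"
  using degree_lagrange_interpolant[OF finite_nodes] unfolding interpolant_with_def card_nodes .

lemma poly_interpolant_with_Y: "y \<in> Y \<Longrightarrow> poly (interpolant_with f v) y = f y"
  unfolding interpolant_with_def using finite_nodes
  by (simp add: poly_lagrange_interpolant_node nodes_def)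

lemma interpolant_with_eq:
  assumes "degree q < card nodes" "\<And>y. y \<in> Y \<Longrightarrow> poly q y = f y"
    and "\<And>z. z \<in> shifted \<Longrightarrow> v z = poly q z"
  shows "interpolant_with f v = q"
proof -
  have "interpolant_with f v = lagrange_interpolant nodes (poly q)"
    unfolding interpolant_with_def using assms(2,3) Y_Int_shifted
    by (intro lagrange_interpolant_cong) (auto simp: nodes_def)
  then show ?thesis using lagrange_interpolant_poly[OF finite_nodes assms(1)] by simp
qed

lemma continuous_on_poly_interpolant_with:
  "continuous_on UNIV (\<lambda>v. poly (interpolant_with f v) t)"
proof -
  have "continuous_on UNIV (\<lambda>v::real \<Rightarrow> real. (if u \<in> Y then f u else v u) * lagrange_basis nodes u t)"
    for u by (cases "u \<in> Y") (auto intro!: continuous_intros)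
  then show ?thesis
    unfolding interpolant_with_def poly_lagrange_interpolant by (intro continuous_on_sum) auto
qed

end

lemma exists_interpolant_below_on_finite:
  assumes "finite Y" "Y \<noteq> {}" "Y \<subseteq> {a..<b}" "m_convex (2 * card Y - 1) {a..b} f"
    and "finite T" "T \<subseteq> {a..b}"
  shows "\<exists>p. degree p \<le> 2 * card Y - 1 \<and> (\<forall>y\<in>Y. poly p y = f y) \<and> (\<forall>t\<in>T. poly p t \<le> f t)"
proof -
  obtain d where "0 < d" and d: "\<forall>y\<in>Y. \<forall>t\<in>insert b (T \<union> Y). y < t \<longrightarrow> d < t - y"
    using exists_separation[of Y "insert b (T \<union> Y)"] assms by auto
  interpret doubled_nodes Y d
    using assms(1) \<open>0 < d\<close> d by unfold_locales auto
  have "nodes \<subseteq> {a..b}"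
    using assms(3) d \<open>0 < d\<close> unfolding nodes_def shifted_def by force
  have "\<forall>t\<in>T. poly (lagrange_interpolant nodes f) t \<le> f t"
    using assms \<open>nodes \<subseteq> {a..b}\<close> d by (auto intro!: lagrange_interpolant_nodes_le)
  moreover have "lagrange_interpolant nodes f = interpolant_with f f"
    unfolding interpolant_with_def by simp
  ultimately show ?thesis using degree_interpolant_with poly_interpolant_with_Y by metis
qed

lemma compact_PiE_UNIV:
  fixes K :: "'a \<Rightarrow> real set"
  assumes "\<And>i. compact (K i)"
  shows "compact (PiE UNIV K)"
proof -
  have "compactin (product_topology (\<lambda>i. euclidean) UNIV) (PiE UNIV K)"
    using assms by (simp add: compactin_PiE)
  then show ?thesis by (simp add: euclidean_product_topology)
qed

lemma exists_interpolant_below: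
  assumes "finite Y" "Y \<noteq> {}" "Y \<subseteq> {a<..<b}" "m_convex (2 * card Y - 1) {a..b} f"
  shows "\<exists>p. degree p \<le> 2 * card Y - 1 \<and> (\<forall>y\<in>Y. poly p y = f y) \<and> (\<forall>t\<in>{a..b}. poly p t \<le> f t)"
proof -
  obtain d where "0 < d" and d: "\<forall>y\<in>Y. \<forall>t\<in>insert b Y. y < t \<longrightarrow> d < t - y"
    using exists_separation[of Y "insert b Y"] assms(1) by auto
  interpret doubled_nodes Y d
    using assms(1) \<open>0 < d\<close> d by unfold_locales auto
  have above: "a < v" if "v \<in> nodes" for v
    using that assms(3) \<open>0 < d\<close> unfolding nodes_def shifted_def by force
  have "shifted \<subseteq> {a..b}"
    using assms(3) d \<open>0 < d\<close> unfolding shifted_def by force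
  have "Y \<subseteq> {a..<b}" "a \<le> b" using assms(2,3) by auto
  have "0 < card Y" using assms(1,2) by (simp add: card_gt_0_iff)
  define lower where
    "lower z = (f a - (\<Sum>u\<in>nodes - {z}. f u * lagrange_basis nodes u a)) / lagrange_basis nodes z a"
    for z
  define K where "K = PiE UNIV (\<lambda>z. if z \<in> shifted then {lower z..f z} else {0})"
  define below where "below t = {v. poly (interpolant_with f v) t \<le> f t}" for t
  have "compact K" unfolding K_def by (rule compact_PiE_UNIV) auto
  moreover have "closed (below t)" for t
    unfolding below_def
    by (rule closed_Collect_le[OF continuous_on_poly_interpolant_with continuous_on_const])
  moreover have "K \<inter> (\<Inter>t\<in>T. below t) \<noteq> {}" if "finite T" "T \<subseteq> {a..b}" for T
  proof -
    have "finite (T \<union> shifted \<union> {a})" "T \<union> shifted \<union> {a} \<subseteq> {a..b}"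
      using that finite_shifted \<open>shifted \<subseteq> {a..b}\<close> \<open>a \<le> b\<close> by auto
    from exists_interpolant_below_on_finite[OF assms(1,2) \<open>Y \<subseteq> {a..<b}\<close> assms(4) this]
    obtain q where q: "degree q \<le> 2 * card Y - 1" "\<forall>y\<in>Y. poly q y = f y"
      "\<forall>t\<in>T \<union> shifted \<union> {a}. poly q t \<le> f t"
      by (elim exE conjE)
    have "degree q < card nodes" using q(1) card_nodes \<open>0 < card Y\<close> by simp
    define v where "v z = (if z \<in> shifted then poly q z else 0)" for z
    have "interpolant_with f v = q"
      using \<open>degree q < card nodes\<close> q(2) by (intro interpolant_with_eq) (auto simp: v_def)
    moreover have "lower z \<le> poly q z" if "z \<in> shifted" for z
      unfolding lower_def using q that above \<open>degree q < card nodes\<close>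
      by (intro shifted_value_lower_bound) auto
    ultimately have "v \<in> K \<inter> (\<Inter>t\<in>T. below t)"
      using q(3) by (auto simp: K_def below_def v_def)
    then show ?thesis by blast
  qed
  ultimately have "K \<inter> (\<Inter>t\<in>{a..b}. below t) \<noteq> {}" by (rule compact_imp_fip_image)
  then obtain v where "\<forall>t\<in>{a..b}. poly (interpolant_with f v) t \<le> f t"
    unfolding below_def by blast
  then show ?thesis using degree_interpolant_with poly_interpolant_with_Y by blast
qed

lemma exists_finite_superset_card:
  assumes "finite X" "X \<subseteq> S" "infinite S" "card X \<le> n"
  shows "\<exists>Y. X \<subseteq> Y \<and> Y \<subseteq> S \<and> finite Y \<and> card Y = n"
proof -
  obtain B where "finite B" "card B = n - card X" "B \<subseteq> S - X"
    using infinite_arbitrarily_large[of "S - X" "n - card X"] assms(1,3)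
    by (auto simp: Diff_infinite_finite)
  moreover from this have "card (X \<union> B) = n"
    using assms(1,4) by (subst card_Un_disjoint) auto
  ultimately show ?thesis using assms(1,2) by (intro exI[of _ "X \<union> B"]) auto
qed

theorem corollary2:
  fixes n :: nat and a b :: real and f :: "real \<Rightarrow> real" and x :: "nat \<Rightarrow> real"
  assumes "n \<ge> 1"
    and "a < b"
    and "m_convex (2 * n - 1) {a..b} f"
    and "\<forall>i\<in>{1..n}. x i \<in> {a<..<b}"
  shows "\<exists>p :: real poly. degree p \<le> 2 * n - 1
           \<and> (\<forall>i\<in>{1..n}. poly p (x i) = f (x i))
           \<and> (\<forall>t\<in>{a..b}. poly p t \<le> f t)"
proof -
  have "card (x ` {1..n}) \<le> n" using card_image_le[of "{1..n}" x] by simp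
  moreover have "x ` {1..n} \<subseteq> {a<..<b}" using assms(4) by blast
  moreover have "infinite {a<..<b}" using assms(2) by simp
  ultimately obtain Y where Y: "x ` {1..n} \<subseteq> Y" "Y \<subseteq> {a<..<b}" "finite Y" "card Y = n"
    using exists_finite_superset_card[of "x ` {1..n}" "{a<..<b}" n] by blast
  then have "Y \<noteq> {}" using assms(1) by auto
  then obtain p where "degree p \<le> 2 * n - 1" "\<forall>y\<in>Y. poly p y = f y" "\<forall>t\<in>{a..b}. poly p t \<le> f t"
    using exists_interpolant_below[of Y a b f] Y assms(3) by auto
  then show ?thesis using Y(1) by blast
qed

end
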